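(* Let $d\ge1$, $\eta>0$, $\gamma>0$, $\sigma>1$, and let $\mathcal{D}'$ be the distribution on $\mathbb{R}^d\times\{-1,+1\}$ with $y$ uniform on $\{-1,+1\}$, $\bm{\mu}=(\eta,\dots,\eta)$, $\bm{x}\mid y=+1\sim\mathcal{N}(\gamma\bm{\mu},\sigma^2 I)$ and $\bm{x}\mid y=-1\sim\mathcal{N}(-\gamma\bm{\mu},I)$. If a linear classifier $f(\bm{x})=\operatorname{sign}(\bm{w}^\top\bm{x}+b)$ with $\|\bm{w}\|_2=1$ minimizes the standard error $\Pr(f(\bm{x})\neq y)$ over all such $(\bm{w},b)$, then $\bm{w}=(\tfrac{1}{\sqrt{d}},\dots,\tfrac{1}{\sqrt{d}})$.
   Context: $I$ denotes the $d\times d$ identity matrix. *)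

theory Defs
  imports "HOL-Probability.Probability"
begin

definition gauss_density :: "real ^ 'n \<Rightarrow> real \<Rightarrow> real ^ 'n \<Rightarrow> real" where
  "gauss_density m s x =
     (2 * pi * s\<^sup>2) powr (- real CARD('n) / 2) * exp (- (norm (x - m))\<^sup>2 / (2 * s\<^sup>2))"

definition gaussian :: "real ^ 'n \<Rightarrow> real \<Rightarrow> (real ^ 'n) measure" where
  "gaussian m s = density lborel (\<lambda>x. ennreal (gauss_density m s x))"

definition mu_vec :: "real \<Rightarrow> real ^ 'n" where
  "mu_vec \<eta> = (\<chi> i. \<eta>)"

definition lin_clf :: "real ^ 'n \<Rightarrow> real \<Rightarrow> real ^ 'n \<Rightarrow> real" where
  "lin_clf w b x = sgn (w \<bullet> x + b)"

text \<open>Standard error Pr_{(x,y) ~ D'}(f(x) \<noteq> y), with y uniform on {-1,+1},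
  x | y=+1 ~ N(gamma mu, sigma^2 I), x | y=-1 ~ N(-gamma mu, I),
  written via the law of total probability.\<close>
definition std_error :: "real \<Rightarrow> real \<Rightarrow> real \<Rightarrow> real ^ 'n \<Rightarrow> real \<Rightarrow> real" where
  "std_error \<eta> \<gamma> \<sigma> w b =
     1/2 * measure (gaussian (\<gamma> *\<^sub>R mu_vec \<eta>) \<sigma>) {x. lin_clf w b x \<noteq> 1}
   + 1/2 * measure (gaussian (- (\<gamma> *\<^sub>R mu_vec \<eta>)) 1) {x. lin_clf w b x \<noteq> -1}"

end

(*
  For a unit vector w, the projection w \<bullet> x of the isotropic Gaussian N(m, s^2 I) is the
  one-dimensional normal N(w \<bullet> m, s^2), because the coordinates are independent normals.
  Hence the standard error of (w, b) is (\<Phi>\<^sub>\<sigma>(-b - t) + \<Phi>\<^sub>1(b - t)) / 2 with t = \<gamma> (w \<bullet> \<mu>),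
  where \<Phi>\<^sub>s is the distribution function of N(0, s^2); both terms strictly decrease in t.
  By Cauchy-Schwarz, w \<bullet> \<mu> is maximal on the unit sphere exactly at w = \<mu> / norm \<mu>, so every other
  unit vector is strictly beaten by this one with the same offset b.
*)
theory Submission
  imports Defs
begin

abbreviation normal_measure :: "real \<Rightarrow> real \<Rightarrow> real measure" where
  "normal_measure \<mu> s \<equiv> density lborel (\<lambda>x. ennreal (normal_density \<mu> s x))"

definition normal_cdf :: "real \<Rightarrow> real \<Rightarrow> real \<Rightarrow> real" where
  "normal_cdf \<mu> s c = measure (normal_measure \<mu> s) {..c}"

lemma normal_cdf_shift:
  assumes "s > 0"
  shows "normal_cdf \<mu> s c = normal_cdf 0 s (c - \<mu>)"
proof -
  interpret prob_space "normal_measure \<mu> s"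
    using assms by (simp add: prob_space_normal_density)
  have "distributed (normal_measure \<mu> s) lborel (\<lambda>x. x) (normal_density \<mu> s)"
    unfolding distributed_def by (simp add: distr_id2)
  from normal_density_affine[OF this assms, of 1 "-\<mu>"]
  have "distributed (normal_measure \<mu> s) lborel (\<lambda>x. x - \<mu>) (normal_density 0 s)"
    by simp
  then have "normal_cdf 0 s (c - \<mu>) = measure (distr (normal_measure \<mu> s) lborel (\<lambda>x. x - \<mu>)) {..c - \<mu>}"
    by (simp add: distributed_def normal_cdf_def)
  also have "\<dots> = measure (normal_measure \<mu> s) ((\<lambda>x. x - \<mu>) -` {..c - \<mu>} \<inter> space (normal_measure \<mu> s))"
    by (rule measure_distr) simp_all
  also have "(\<lambda>x. x - \<mu>) -` {..c - \<mu>} \<inter> space (normal_measure \<mu> s) = {..c}"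
    by auto
  finally show ?thesis
    by (simp add: normal_cdf_def)
qed

lemma normal_cdf_strict_mono:
  assumes s: "s > 0" and c: "c1 < c2"
  shows "normal_cdf \<mu> s c1 < normal_cdf \<mu> s c2"
proof -
  let ?M = "normal_measure \<mu> s"
  interpret prob_space ?M
    using s by (simp add: prob_space_normal_density)
  have "{c1<..c2} \<notin> null_sets ?M"
  proof
    assume "{c1<..c2} \<in> null_sets ?M"
    then have "AE x in lborel. x \<in> {c1<..c2} \<longrightarrow> ennreal (normal_density \<mu> s x) = 0"
      by (subst (asm) null_sets_density_iff) auto
    then have "AE x in lborel. x \<notin> {c1<..c2}"
      by (rule eventually_mono) (metis normal_density_pos[OF s] ennreal_eq_0_iff not_le)
    then have "emeasure lborel {c1<..c2} = 0"
      by (subst AE_iff_measurable[symmetric]) auto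
    with c show False
      by simp
  qed
  then have "measure ?M {c1<..c2} > 0"
    by (simp add: emeasure_eq_measure null_sets_def zero_less_measure_iff)
  moreover have "measure ?M {..c2} = measure ?M {..c1} + measure ?M {c1<..c2}"
    using c by (subst finite_measure_Union[symmetric]) (auto intro: arg_cong[where f = "measure ?M"])
  ultimately show ?thesis
    by (simp add: normal_cdf_def)
qed

lemma normal_cdf_strict_antimono_mean:
  assumes "s > 0" and "\<mu>1 < \<mu>2"
  shows "normal_cdf \<mu>2 s c < normal_cdf \<mu>1 s c"
  using assms normal_cdf_strict_mono[of s "c - \<mu>2" "c - \<mu>1" 0]
  by (simp add: normal_cdf_shift[of s \<mu>1] normal_cdf_shift[of s \<mu>2])

lemma indep_vars_PiM_components:
  assumes "I \<noteq> {}" and "\<And>i. i \<in> I \<Longrightarrow> prob_space (M i)"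
  shows "prob_space.indep_vars (PiM I M) M (\<lambda>i x. x i) I"
proof -
  interpret prob_space "PiM I M"
    using assms(2) by (rule prob_space_PiM)
  have "distr (PiM I M) (PiM I M) (\<lambda>x. \<lambda>i\<in>I. x i) = distr (PiM I M) (PiM I M) (\<lambda>x. x)"
    by (rule distr_cong) (auto simp: space_PiM PiE_def extensional_restrict)
  also have "\<dots> = PiM I (\<lambda>i. distr (PiM I M) (M i) (\<lambda>x. x i))"
    using assms(2) by (auto simp: distr_id2 distr_PiM_component intro!: PiM_cong)
  finally show ?thesis
    using assms(1) by (subst indep_vars_iff_distr_eq_PiM') auto
qed

definition eucl_gauss_density :: "'a::euclidean_space \<Rightarrow> real \<Rightarrow> 'a \<Rightarrow> real" where
  "eucl_gauss_density m s x =
     (2 * pi * s\<^sup>2) powr (- real DIM('a) / 2) * exp (- (norm (x - m))\<^sup>2 / (2 * s\<^sup>2))"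

definition eucl_gaussian :: "'a::euclidean_space \<Rightarrow> real \<Rightarrow> 'a measure" where
  "eucl_gaussian m s = density lborel (\<lambda>x. ennreal (eucl_gauss_density m s x))"

lemma gaussian_eq_eucl_gaussian: "gaussian = eucl_gaussian"
  by (simp add: fun_eq_iff gaussian_def eucl_gaussian_def gauss_density_def eucl_gauss_density_def)

lemma powr_minus_real_div_2:
  assumes "y > 0"
  shows "y powr (- real n / 2) = (1 / sqrt y) ^ n"
proof -
  have "(1 / sqrt y) ^ n = (y powr (-1/2)) ^ n"
    using assms by (simp add: powr_minus_divide powr_half_sqrt)
  also have "\<dots> = y powr (real n * (-1/2))"
    using assms by (simp add: powr_realpow[symmetric] powr_powr)
  finally show ?thesis
    by simp
qed

lemma eucl_gauss_density_sum_Basis: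
  fixes m :: "'a::euclidean_space"
  assumes "s > 0"
  shows "eucl_gauss_density m s (\<Sum>b\<in>Basis. f b *\<^sub>R b) = (\<Prod>b\<in>Basis. normal_density (m \<bullet> b) s (f b))"
proof -
  let ?x = "(\<Sum>b\<in>Basis. f b *\<^sub>R b) :: 'a"
  have norm: "(norm (?x - m))\<^sup>2 = (\<Sum>b\<in>Basis. (f b - m \<bullet> b)\<^sup>2)"
    unfolding power2_norm_eq_inner
    by (subst euclidean_inner) (simp add: inner_diff_left power2_eq_square)
  have const: "(1 / sqrt (2 * pi * s\<^sup>2)) ^ DIM('a) = (2 * pi * s\<^sup>2) powr (- real DIM('a) / 2)"
    using assms by (intro powr_minus_real_div_2[symmetric]) simp
  have "(\<Prod>b\<in>Basis. normal_density (m \<bullet> b) s (f b)) =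
        (1 / sqrt (2 * pi * s\<^sup>2)) ^ DIM('a) * exp (\<Sum>b\<in>Basis. - (f b - m \<bullet> b)\<^sup>2 / (2 * s\<^sup>2))"
    unfolding normal_density_def prod.distrib prod_constant by (simp add: exp_sum)
  also have "(\<Sum>b\<in>Basis. - (f b - m \<bullet> b)\<^sup>2 / (2 * s\<^sup>2)) = - (norm (?x - m))\<^sup>2 / (2 * s\<^sup>2)"
    unfolding norm by (simp add: sum_divide_distrib sum_negf)
  finally show ?thesis
    unfolding eucl_gauss_density_def const by simp
qed

lemma density_PiM_lborel_prod_normal:
  fixes m :: "'a::euclidean_space"
  assumes "s > 0"
  shows "density (PiM Basis (\<lambda>_. lborel)) (\<lambda>f. ennreal (\<Prod>b\<in>Basis. normal_density (m \<bullet> b) s (f b)))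
       = PiM Basis (\<lambda>b. normal_measure (m \<bullet> b) s)"
    (is "density ?P ?g = PiM Basis ?N")
proof -
  interpret N: product_sigma_finite ?N
    unfolding product_sigma_finite_def
    using assms by (simp add: prob_space_imp_sigma_finite prob_space_normal_density)
  interpret L: product_sigma_finite "\<lambda>_::'a. lborel :: real measure"
    unfolding product_sigma_finite_def by (auto intro: lborel.sigma_finite_measure_axioms)
  show ?thesis
  proof (rule N.PiM_eqI)
    show "sets (density ?P ?g) = sets (PiM Basis ?N)"
      by (subst sets_density) (rule sets_PiM_cong; simp)
  next
    fix A assume "\<And>b. b \<in> (Basis :: 'a set) \<Longrightarrow> A b \<in> sets (?N b)"
    then have A: "\<And>b. b \<in> (Basis :: 'a set) \<Longrightarrow> A b \<in> sets borel"
      by simp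
    have "emeasure (density ?P ?g) (Pi\<^sub>E Basis A) = (\<integral>\<^sup>+ f. ?g f * indicator (Pi\<^sub>E Basis A) f \<partial>?P)"
      using A by (intro emeasure_density) (auto intro!: sets_PiM_I_finite)
    also have "\<dots> = (\<integral>\<^sup>+ f. (\<Prod>b\<in>Basis. ennreal (normal_density (m \<bullet> b) s (f b)) * indicator (A b) (f b)) \<partial>?P)"
    proof (rule nn_integral_cong)
      fix f assume "f \<in> space ?P"
      then have "indicator (Pi\<^sub>E Basis A) f = (\<Prod>b\<in>Basis. indicator (A b) (f b) :: ennreal)"
        by (auto simp: space_PiM indicator_def PiE_iff)
      then show "?g f * indicator (Pi\<^sub>E Basis A) f
          = (\<Prod>b\<in>Basis. ennreal (normal_density (m \<bullet> b) s (f b)) * indicator (A b) (f b))"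
        by (simp add: prod.distrib prod_ennreal normal_density_nonneg)
    qed
    also have "\<dots> = (\<Prod>b\<in>Basis. (\<integral>\<^sup>+ x. ennreal (normal_density (m \<bullet> b) s x) * indicator (A b) x \<partial>lborel))"
      using A by (intro L.product_nn_integral_prod) auto
    also have "\<dots> = (\<Prod>b\<in>Basis. emeasure (?N b) (A b))"
      using A by (intro prod.cong refl emeasure_density[symmetric]) auto
    finally show "emeasure (density ?P ?g) (Pi\<^sub>E Basis A) = (\<Prod>b\<in>Basis. emeasure (?N b) (A b))" .
  qed simp
qed

lemma eucl_gaussian_eq_distr_PiM:
  fixes m :: "'a::euclidean_space"
  assumes "s > 0"
  shows "eucl_gaussian m s =
    distr (PiM Basis (\<lambda>b. normal_measure (m \<bullet> b) s)) borel (\<lambda>f. \<Sum>b\<in>Basis. f b *\<^sub>R b)"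
proof -
  let ?\<Phi> = "\<lambda>f. (\<Sum>b\<in>Basis. f b *\<^sub>R b) :: 'a"
  let ?P = "PiM (Basis :: 'a set) (\<lambda>_. lborel :: real measure)"
  have "eucl_gaussian m s = density (distr ?P borel ?\<Phi>) (\<lambda>x. ennreal (eucl_gauss_density m s x))"
    unfolding eucl_gaussian_def by (simp only: lborel_eq[symmetric])
  also have "\<dots> = distr (density ?P (\<lambda>f. ennreal (eucl_gauss_density m s (?\<Phi> f)))) borel ?\<Phi>"
    by (rule density_distr) (simp_all add: eucl_gauss_density_def)
  also have "(\<lambda>f. ennreal (eucl_gauss_density m s (?\<Phi> f)))
      = (\<lambda>f. ennreal (\<Prod>b\<in>Basis. normal_density (m \<bullet> b) s (f b)))"
    using assms by (simp add: eucl_gauss_density_sum_Basis)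
  finally show ?thesis
    using assms by (simp only: density_PiM_lborel_prod_normal)
qed

lemma PiM_normal_inner_distributed:
  fixes m w :: "'a::euclidean_space"
  assumes s: "s > 0" and w: "w \<noteq> 0"
  shows "distributed (PiM Basis (\<lambda>b. normal_measure (m \<bullet> b) s)) lborel
    (\<lambda>f. \<Sum>b\<in>Basis. (w \<bullet> b) * f b) (normal_density (w \<bullet> m) (s * norm w))"
proof -
  define Q where "Q = PiM (Basis :: 'a set) (\<lambda>b. normal_measure (m \<bullet> b) s)"
  have N: "\<And>b. prob_space (normal_measure (m \<bullet> b) s)"
    using s by (simp add: prob_space_normal_density)
  interpret Q: prob_space Q
    unfolding Q_def by (intro prob_space_PiM N)
  \<comment> \<open>coordinates with zero weight are dropped, since a normal law needs positive variance\<close>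
  define I where "I = {b\<in>Basis. w \<bullet> b \<noteq> 0}"
  have I: "finite I" "I \<noteq> {}" "I \<subseteq> Basis"
    using w euclidean_all_zero_iff[of w] by (auto simp: I_def)
  have "Q.indep_vars (\<lambda>b. normal_measure (m \<bullet> b) s) (\<lambda>b f. f b) Basis"
    unfolding Q_def by (rule indep_vars_PiM_components) (simp_all add: N)
  then have "Q.indep_vars (\<lambda>b. normal_measure (m \<bullet> b) s) (\<lambda>b f. f b) I"
    using I(3) by (rule Q.indep_vars_subset)
  then have indep: "Q.indep_vars (\<lambda>_. borel) (\<lambda>b f. (w \<bullet> b) * f b) I"
    by (rule Q.indep_vars_compose2) simp
  have normal: "distributed Q lborel (\<lambda>f. (w \<bullet> b) * f b) (normal_density ((w \<bullet> b) * (m \<bullet> b)) (\<bar>w \<bullet> b\<bar> * s))"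
    if "b \<in> I" for b
  proof -
    have b: "b \<in> Basis" and wb: "w \<bullet> b \<noteq> 0"
      using that by (auto simp: I_def)
    have "distr Q lborel (\<lambda>f. f b) = distr Q (normal_measure (m \<bullet> b) s) (\<lambda>f. f b)"
      by (rule distr_cong) auto
    also have "\<dots> = normal_measure (m \<bullet> b) s"
      unfolding Q_def using b N by (intro distr_PiM_component) auto
    finally have "distributed Q lborel (\<lambda>f. f b) (normal_density (m \<bullet> b) s)"
      unfolding distributed_def using b by (auto simp: Q_def)
    from Q.normal_density_affine[OF this s wb, of 0] show ?thesis
      by simp
  qed
  have "distributed Q lborel (\<lambda>f. \<Sum>b\<in>I. (w \<bullet> b) * f b)
      (normal_density (\<Sum>b\<in>I. (w \<bullet> b) * (m \<bullet> b)) (sqrt (\<Sum>b\<in>I. (\<bar>w \<bullet> b\<bar> * s)\<^sup>2)))"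
    using I s by (intro Q.sum_indep_normal indep normal) (auto simp: I_def)
  moreover have sum_I: "(\<Sum>b\<in>I. g b) = (\<Sum>b\<in>Basis. g b)"
    if "\<And>b. w \<bullet> b = 0 \<Longrightarrow> g b = 0" for g :: "'a \<Rightarrow> real"
    using I that by (intro sum.mono_neutral_left) (auto simp: I_def)
  moreover have "(\<Sum>b\<in>I. (w \<bullet> b) * (m \<bullet> b)) = w \<bullet> m"
    by (simp add: sum_I euclidean_inner[of w m])
  moreover have "(\<Sum>b\<in>I. (\<bar>w \<bullet> b\<bar> * s)\<^sup>2) = (s * norm w)\<^sup>2"
  proof -
    have "(\<Sum>b\<in>I. (\<bar>w \<bullet> b\<bar> * s)\<^sup>2) = s\<^sup>2 * (\<Sum>b\<in>Basis. (w \<bullet> b) * (w \<bullet> b))"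
      by (simp add: sum_I sum_distrib_left power_mult_distrib power2_eq_square mult_ac)
    also have "\<dots> = (s * norm w)\<^sup>2"
      by (simp add: euclidean_inner[of w w, symmetric] power_mult_distrib power2_norm_eq_inner)
    finally show ?thesis .
  qed
  ultimately show ?thesis
    using s unfolding Q_def by (simp add: sum_I)
qed

lemma eucl_gaussian_halfspace:
  fixes m w :: "'a::euclidean_space"
  assumes s: "s > 0" and w: "w \<noteq> 0"
  shows "measure (eucl_gaussian m s) {x. w \<bullet> x \<le> c} = normal_cdf (w \<bullet> m) (s * norm w) c"
proof -
  let ?Q = "PiM (Basis :: 'a set) (\<lambda>b. normal_measure (m \<bullet> b) s)"
  let ?\<Phi> = "\<lambda>f. (\<Sum>b\<in>Basis. f b *\<^sub>R b) :: 'a"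
  have "measure (eucl_gaussian m s) {x. w \<bullet> x \<le> c} = measure (distr ?Q borel ?\<Phi>) {x. w \<bullet> x \<le> c}"
    using s by (simp add: eucl_gaussian_eq_distr_PiM)
  also have "\<dots> = measure ?Q (?\<Phi> -` {x. w \<bullet> x \<le> c} \<inter> space ?Q)"
    by (rule measure_distr) simp_all
  also have "?\<Phi> -` {x. w \<bullet> x \<le> c} \<inter> space ?Q = (\<lambda>f. \<Sum>b\<in>Basis. (w \<bullet> b) * f b) -` {..c} \<inter> space ?Q"
    by (auto simp: inner_sum_right mult.commute)
  also have "measure ?Q \<dots> = measure (distr ?Q lborel (\<lambda>f. \<Sum>b\<in>Basis. (w \<bullet> b) * f b)) {..c}"
    by (rule measure_distr[symmetric]) simp_all
  also have "\<dots> = normal_cdf (w \<bullet> m) (s * norm w) c"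
    using PiM_normal_inner_distributed[OF s w, of m] by (simp add: distributed_def normal_cdf_def)
  finally show ?thesis .
qed

lemma std_error_eq_normal_cdf:
  fixes w :: "real ^ 'n"
  assumes "\<sigma> > 0" and "norm w = 1"
  shows "std_error \<eta> \<gamma> \<sigma> w b =
    (normal_cdf (w \<bullet> (\<gamma> *\<^sub>R mu_vec \<eta>)) \<sigma> (- b) + normal_cdf (w \<bullet> (\<gamma> *\<^sub>R mu_vec \<eta>)) 1 b) / 2"
proof -
  let ?m = "\<gamma> *\<^sub>R mu_vec \<eta> :: real ^ 'n"
  have w: "w \<noteq> 0" "- w \<noteq> 0"
    using assms(2) by auto
  have "{x. lin_clf w b x \<noteq> 1} = {x. w \<bullet> x \<le> - b}"
    by (auto simp: lin_clf_def sgn_if)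
  then have pos: "measure (gaussian ?m \<sigma>) {x. lin_clf w b x \<noteq> 1} = normal_cdf (w \<bullet> ?m) \<sigma> (- b)"
    using eucl_gaussian_halfspace[OF assms(1) w(1)] assms(2) by (simp add: gaussian_eq_eucl_gaussian)
  have "{x. lin_clf w b x \<noteq> -1} = {x. (- w) \<bullet> x \<le> b}"
    by (auto simp: lin_clf_def sgn_if)
  then have neg: "measure (gaussian (- ?m) 1) {x. lin_clf w b x \<noteq> -1} = normal_cdf (w \<bullet> ?m) 1 b"
    using eucl_gaussian_halfspace[OF zero_less_one w(2)] assms(2) by (simp add: gaussian_eq_eucl_gaussian)
  show ?thesis
    unfolding std_error_def pos neg by simp
qed

lemma std_error_strict_antimono_inner_mean:
  fixes w w' :: "real ^ 'n"
  assumes "\<sigma> > 0" and "norm w = 1" and "norm w' = 1"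
    and "w \<bullet> (\<gamma> *\<^sub>R mu_vec \<eta>) < w' \<bullet> (\<gamma> *\<^sub>R mu_vec \<eta>)"
  shows "std_error \<eta> \<gamma> \<sigma> w' b < std_error \<eta> \<gamma> \<sigma> w b"
  using normal_cdf_strict_antimono_mean[OF assms(1) assms(4), of "- b"]
    normal_cdf_strict_antimono_mean[OF zero_less_one assms(4), of b]
  by (simp add: std_error_eq_normal_cdf assms)

lemma inner_less_one_if_unit_neq:
  fixes v w :: "'a::real_inner"
  assumes "norm v = 1" and "norm w = 1" and "v \<noteq> w"
  shows "v \<bullet> w < 1"
proof -
  have "0 < (norm (v - w))\<^sup>2"
    using assms(3) by simp
  also have "(norm (v - w))\<^sup>2 = 2 - 2 * (v \<bullet> w)"
    using assms(1,2) by (simp add: power2_norm_eq_inner inner_diff_left inner_diff_right inner_commute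
        norm_eq_1)
  finally show ?thesis
    by simp
qed

lemma norm_vec_inverse_sqrt_card: "norm (\<chi> i::'n::finite. 1 / sqrt (real CARD('n))) = 1"
  by (simp add: norm_eq_sqrt_inner inner_vec_def power2_eq_square[symmetric] power_divide)

lemma mu_vec_eq_scaleR_vec_inverse_sqrt_card:
  "(mu_vec \<eta> :: real ^ 'n) = (\<eta> * sqrt (real CARD('n))) *\<^sub>R (\<chi> i. 1 / sqrt (real CARD('n)))"
  by (simp add: mu_vec_def vec_eq_iff)

theorem lemma1:
  fixes \<eta> \<gamma> \<sigma> b :: real and w :: "real ^ 'n"
  assumes "\<eta> > 0" and "\<gamma> > 0" and "\<sigma> > 1"
    and "norm w = 1"
    and "\<forall>(w' :: real ^ 'n) b'. norm w' = 1 \<longrightarrow>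
           std_error \<eta> \<gamma> \<sigma> w b \<le> std_error \<eta> \<gamma> \<sigma> w' b'"
  shows "w = (\<chi> i. 1 / sqrt (real CARD('n)))"
proof (rule ccontr)
  define u :: "real ^ 'n" where "u = (\<chi> i. 1 / sqrt (real CARD('n)))"
  have u: "norm u = 1"
    unfolding u_def by (rule norm_vec_inverse_sqrt_card)
  assume "w \<noteq> (\<chi> i. 1 / sqrt (real CARD('n)))"
  then have "w \<bullet> u < 1"
    using assms(4) u by (intro inner_less_one_if_unit_neq) (simp_all add: u_def)
  moreover have "u \<bullet> u = 1"
    using u by (simp add: norm_eq_1)
  moreover have "v \<bullet> (\<gamma> *\<^sub>R mu_vec \<eta>) = \<gamma> * \<eta> * sqrt (real CARD('n)) * (v \<bullet> u)" for v
    by (simp add: mu_vec_eq_scaleR_vec_inverse_sqrt_card u_def)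
  ultimately have "w \<bullet> (\<gamma> *\<^sub>R mu_vec \<eta>) < u \<bullet> (\<gamma> *\<^sub>R mu_vec \<eta>)"
    using assms(1,2) by simp
  then have "std_error \<eta> \<gamma> \<sigma> u b < std_error \<eta> \<gamma> \<sigma> w b"
    using assms(3,4) u by (intro std_error_strict_antimono_inner_mean) simp_all
  with assms(5) u show False
    by (meson not_le)
qed

end
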